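(* For every $k\ge2$, $n\ge0$ and nonnegative integers $m_1,\dots,m_k$, $$\mathcal D_k(m_1,\dots,m_k;n)=\sum_{t_1,\dots,t_{k-1}\ge0}\mathcal D^{ss}_k(m_1+2t_1,\dots,m_{k-1}+2t_{k-1},m_k;n).$$
   Context: A partition is a finite nonincreasing sequence $\lambda=(\lambda_1,\dots,\lambda_r)$ of positive integers (possibly empty); $l(\lambda)=r$, $|\lambda|=\sum\lambda_i$, $\lambda_1$ the largest part. Let $k\ge1$. A $k$-marked Durfee symbol of $n$ is an array $\eta=\begin{pmatrix}\alpha^k,&\dots,&\alpha^1\\ \beta^k,&\dots,&\beta^1\end{pmatrix}_D$ consisting of an integer $D\ge0$ and $2k$ partitions $\alpha^i,\beta^i$ with $\sum_{i=1}^k(|\alpha^i|+|\beta^i|)+D^2=n$, such that: (1) $\alpha^i$ is nonempty for $1\le i<k$; (2) for $1\le i<k$ every part of $\beta^i$ is $\le\alpha^i_1$, and for $2\le i\le k$ every part of $\alpha^i$ and every part of $\beta^i$ is $\ge\alpha^{i-1}_1$; (3) all parts of $\alpha^k$ and $\beta^k$ are $\le D$. The pair $(\alpha^i,\beta^i)$ is the $i$th vector. The $i$th rank is $\rho_i(\eta)=l(\alpha^i)-l(\beta^i)-1$ for $1\le i<k$ and $\rho_k(\eta)=l(\alpha^k)-l(\beta^k)$. $\mathcal D_k(m_1,\dots,m_k;n)$ is the number of $k$-marked Durfee symbols of $n$ with $\rho_i=m_i$ for all $i$. A pair of partitions $(\alpha,\beta)$ is strict shifted if $l(\alpha)>l(\beta)$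 and $\alpha_{i+1}>\beta_i$ for $1\le i\le l(\beta)$. A $k$-marked Durfee symbol is strict shifted if each vector $(\alpha^i,\beta^i)$, $1\le i\le k-1$, is strict shifted; $\mathcal D^{ss}_k(m_1,\dots,m_k;n)$ is the number of $k$-marked strict shifted Durfee symbols of $n$ with $i$th rank $m_i$ for all $i$. *)

theory Defs
  imports "HOL-Analysis.Analysis"
begin

definition is_partition :: "nat list \<Rightarrow> bool" where
  "is_partition xs \<longleftrightarrow> sorted_wrt (\<ge>) xs \<and> (\<forall>p\<in>set xs. 0 < p)"

text \<open>A k-marked Durfee symbol is represented as (D, as, bs) where as and bs are lists
  of length k; as ! (i-1) is alpha^i and bs ! (i-1) is beta^i (1 \<le> i \<le> k).
  The largest part alpha^i_1 is hd (as ! (i-1)).\<close>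
type_synonym dsym = "nat \<times> nat list list \<times> nat list list"

definition is_kmds :: "nat \<Rightarrow> nat \<Rightarrow> dsym \<Rightarrow> bool" where
  "is_kmds k n \<eta> \<longleftrightarrow> (case \<eta> of (D, as, bs) \<Rightarrow>
     length as = k \<and> length bs = k \<and>
     (\<forall>i<k. is_partition (as ! i) \<and> is_partition (bs ! i)) \<and>
     (\<forall>i. i + 1 < k \<longrightarrow> as ! i \<noteq> []) \<and>
     (\<forall>i. i + 1 < k \<longrightarrow> (\<forall>p\<in>set (bs ! i). p \<le> hd (as ! i))) \<and>
     (\<forall>i. 1 \<le> i \<and> i < k \<longrightarrow>
        (\<forall>p\<in>set (as ! i) \<union> set (bs ! i). hd (as ! (i - 1)) \<le> p)) \<and>
     (\<forall>p\<in>set (as ! (k - 1)) \<union> set (bs ! (k - 1)). p \<le> D) \<and>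
     (\<Sum>i<k. sum_list (as ! i) + sum_list (bs ! i)) + D ^ 2 = n)"

text \<open>The (i+1)-th rank (0-based index i).\<close>
definition dsym_rank :: "nat \<Rightarrow> dsym \<Rightarrow> nat \<Rightarrow> int" where
  "dsym_rank k \<eta> i = (case \<eta> of (D, as, bs) \<Rightarrow>
     (if i + 1 < k then int (length (as ! i)) - int (length (bs ! i)) - 1
      else int (length (as ! i)) - int (length (bs ! i))))"

definition dsym_ranks :: "nat \<Rightarrow> dsym \<Rightarrow> int list" where
  "dsym_ranks k \<eta> = map (dsym_rank k \<eta>) [0..<k]"

definition strict_shifted :: "nat list \<Rightarrow> nat list \<Rightarrow> bool" where
  "strict_shifted \<alpha> \<beta> \<longleftrightarrow> length \<beta> < length \<alpha> \<and> (\<forall>i<length \<beta>. \<beta> ! i < \<alpha> ! Suc i)"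

definition is_ss_kmds :: "nat \<Rightarrow> nat \<Rightarrow> dsym \<Rightarrow> bool" where
  "is_ss_kmds k n \<eta> \<longleftrightarrow> is_kmds k n \<eta> \<and>
     (case \<eta> of (D, as, bs) \<Rightarrow> (\<forall>i. i + 1 < k \<longrightarrow> strict_shifted (as ! i) (bs ! i)))"

text \<open>ms ! (i-1) = m_i.\<close>
definition Dk :: "nat \<Rightarrow> int list \<Rightarrow> nat \<Rightarrow> nat" where
  "Dk k ms n = card {\<eta>. is_kmds k n \<eta> \<and> dsym_ranks k \<eta> = ms}"

definition Dss :: "nat \<Rightarrow> int list \<Rightarrow> nat \<Rightarrow> nat" where
  "Dss k ms n = card {\<eta>. is_ss_kmds k n \<eta> \<and> dsym_ranks k \<eta> = ms}"

end

theory Submission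
  imports Defs "HOL-Library.Multiset"
begin

text \<open>
  Write a non-final vector of a marked Durfee symbol as (a # A, B), where a is the
  largest part of alpha.  The vector is strict shifted iff for every threshold v the number of
  parts of A exceeding v is at least the number of parts of B that are at least v.  If this
  fails, let v be the largest threshold where it fails; exchanging the parts above v between A and
  B and rebalancing the parts equal to v yields a pair with the same parts, rank larger by 2, and
  whose swapped pair fails the criterion again at v.  This transfer is undone by the transfer of
  the swapped pair, so for the set of symbols whose first J vectors are strict shifted we get

    count (ranks m, J) = count (ranks m, J + 1) + count (ranks m with m_J raised by 2, J).

  Ranks are bounded by n, so iterating this in m_J and then over J = 0, ..., k - 2 expresses D_k
  as a finite multiple sum of D^ss_k; the infinite sum of the theorem reduces to this finite sum
  because all its other terms vanish.
\<close>


section \<open>Threshold counts of multisets\<close>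

definition gt_count :: "nat multiset \<Rightarrow> nat \<Rightarrow> nat" where
  "gt_count A v = size (filter_mset (\<lambda>x. v < x) A)"

definition ge_count :: "nat multiset \<Rightarrow> nat \<Rightarrow> nat" where
  "ge_count A v = size (filter_mset (\<lambda>x. v \<le> x) A)"

text \<open>The excess of A over B at threshold v; a pair (a # A, B) of descending lists is strict
  shifted iff the excess is nowhere negative, i.e. iff the pair is not deficient.\<close>
definition shift_excess :: "nat multiset \<Rightarrow> nat multiset \<Rightarrow> nat \<Rightarrow> int" where
  "shift_excess A B v = int (gt_count A v) - int (ge_count B v)"

definition deficient :: "nat multiset \<Rightarrow> nat multiset \<Rightarrow> bool" where
  "deficient A B \<longleftrightarrow> (\<exists>v. shift_excess A B v < 0)"

lemma ge_count_eq: "ge_count A v = gt_count A v + count A v"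
proof -
  have "filter_mset (\<lambda>x. v \<le> x) A = filter_mset (\<lambda>x. v < x) A + filter_mset (\<lambda>x. x = v) A"
    by (rule multiset_eqI) auto
  then show ?thesis unfolding ge_count_def gt_count_def by (simp add: filter_eq_replicate_mset)
qed

lemma gt_count_antimono: "v \<le> w \<Longrightarrow> gt_count A w \<le> gt_count A v"
  unfolding gt_count_def by (intro size_mset_mono filter_mset_mono_strong) auto

lemma mset_split_at: "(M :: nat multiset) =
    filter_mset (\<lambda>x. v < x) M + filter_mset (\<lambda>x. x < v) M + replicate_mset (count M v) v"
  by (rule multiset_eqI) (auto simp: count_replicate_mset)

lemma size_split_at: "size (M :: nat multiset) = gt_count M v + size (filter_mset (\<lambda>x. x < v) M) + count M v"
  by (subst mset_split_at[of _ v]) (simp add: gt_count_def)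

text \<open>A pair with more parts on the second side is deficient already at threshold 0.\<close>
lemma deficient_if_size_less:
  assumes "size B < size A"
  shows "deficient B A"
proof -
  have "gt_count B 0 \<le> size B" unfolding gt_count_def by simp
  moreover have "ge_count A 0 = size A" using size_split_at[of A 0] ge_count_eq[of A 0] by simp
  ultimately have "shift_excess B A 0 < 0" using assms unfolding shift_excess_def by simp
  then show ?thesis unfolding deficient_def by blast
qed

text \<open>Deficits only occur below the largest part of B, so there is a largest one.\<close>
lemma finite_deficits: "finite {v. shift_excess A B v < 0}"
proof (rule finite_subset)
  show "{v. shift_excess A B v < 0} \<subseteq> {..Max_mset B}"
  proof
    fix v assume "v \<in> {v. shift_excess A B v < 0}"
    then have "0 < ge_count B v" unfolding shift_excess_def by simp
    then obtain x where "x \<in># filter_mset (\<lambda>x. v \<le> x) B"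
      unfolding ge_count_def by (metis multiset_nonemptyE size_empty less_irrefl)
    then have "x \<in># B" "v \<le> x" by auto
    then show "v \<in> {..Max_mset B}" by (meson Max_ge atMost_iff finite_set_mset le_trans)
  qed
qed simp


section \<open>The transfer at the largest deficit\<close>

definition pivot :: "nat multiset \<Rightarrow> nat multiset \<Rightarrow> nat" where
  "pivot A B = Max {v. shift_excess A B v < 0}"

definition surplus :: "nat multiset \<Rightarrow> nat multiset \<Rightarrow> nat" where
  "surplus A B = gt_count A (pivot A B) - gt_count B (pivot A B)"

definition transfer :: "nat multiset \<Rightarrow> nat multiset \<Rightarrow> nat multiset \<times> nat multiset" where
  "transfer A B = (let v = pivot A B; s = surplus A B in
     (filter_mset (\<lambda>x. v < x) B + filter_mset (\<lambda>x. x < v) A + replicate_mset (count A v + s + 1) v,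
      filter_mset (\<lambda>x. v < x) A + filter_mset (\<lambda>x. x < v) B + replicate_mset (count B v - (s + 1)) v))"

lemma pivot_deficit:
  assumes "deficient A B"
  shows "shift_excess A B (pivot A B) < 0"
  using assms finite_deficits[of A B] Max_in unfolding deficient_def pivot_def by fastforce

lemma pivot_greatest: "shift_excess A B w < 0 \<Longrightarrow> w \<le> pivot A B"
  using finite_deficits[of A B] unfolding pivot_def by (simp add: Max_ge)

text \<open>At the pivot A has at least as many larger parts as B (there is no deficit just above it),
  and B has more than surplus copies of the pivot (there is a deficit at it).\<close>
lemma pivot_surplus:
  assumes "deficient A B"
  shows "gt_count B (pivot A B) \<le> gt_count A (pivot A B)"
    and "surplus A B + 1 \<le> count B (pivot A B)"
proof -
  define v where "v = pivot A B"
  have "\<not> shift_excess A B (Suc v) < 0" using pivot_greatest[of A B "Suc v"] v_def by auto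
  moreover have "ge_count B (Suc v) = gt_count B v"
    unfolding ge_count_def gt_count_def by (metis Suc_le_eq)
  moreover have "gt_count A (Suc v) \<le> gt_count A v" by (rule gt_count_antimono) simp
  ultimately show le: "gt_count B (pivot A B) \<le> gt_count A (pivot A B)"
    unfolding shift_excess_def v_def by linarith
  have "shift_excess A B v < 0" using pivot_deficit[OF assms] v_def by simp
  then show "surplus A B + 1 \<le> count B (pivot A B)"
    using le unfolding shift_excess_def ge_count_eq surplus_def v_def by linarith
qed

lemma transfer_local:
  assumes tr: "transfer A B = (A', B')" and v: "v = pivot A B"
  shows "filter_mset (\<lambda>x. v < x) A' = filter_mset (\<lambda>x. v < x) B"
    and "filter_mset (\<lambda>x. v < x) B' = filter_mset (\<lambda>x. v < x) A"
    and "filter_mset (\<lambda>x. x < v) A' = filter_mset (\<lambda>x. x < v) A"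
    and "filter_mset (\<lambda>x. x < v) B' = filter_mset (\<lambda>x. x < v) B"
    and "count A' v = count A v + surplus A B + 1"
    and "count B' v = count B v - (surplus A B + 1)"
    and "v < w \<Longrightarrow> shift_excess B' A' w = shift_excess A B w"
proof -
  have A': "A' = filter_mset (\<lambda>x. v < x) B + filter_mset (\<lambda>x. x < v) A
                   + replicate_mset (count A v + surplus A B + 1) v"
   and B': "B' = filter_mset (\<lambda>x. v < x) A + filter_mset (\<lambda>x. x < v) B
                   + replicate_mset (count B v - (surplus A B + 1)) v"
    using tr unfolding transfer_def v Let_def by auto
  show "filter_mset (\<lambda>x. v < x) A' = filter_mset (\<lambda>x. v < x) B"
    "filter_mset (\<lambda>x. v < x) B' = filter_mset (\<lambda>x. v < x) A"
    "filter_mset (\<lambda>x. x < v) A' = filter_mset (\<lambda>x. x < v) A"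
    "filter_mset (\<lambda>x. x < v) B' = filter_mset (\<lambda>x. x < v) B"
    "count A' v = count A v + surplus A B + 1" "count B' v = count B v - (surplus A B + 1)"
    unfolding A' B' by (auto intro!: multiset_eqI simp: count_replicate_mset)
  assume "v < w"
  then have "filter_mset (\<lambda>x. w < x) B' = filter_mset (\<lambda>x. w < x) A"
    "filter_mset (\<lambda>x. w \<le> x) A' = filter_mset (\<lambda>x. w \<le> x) B"
    unfolding A' B' by (auto intro!: multiset_eqI simp: count_replicate_mset)
  then show "shift_excess B' A' w = shift_excess A B w"
    unfolding shift_excess_def gt_count_def ge_count_def by simp
qed

lemma transfer_union:
  assumes "deficient A B" and "transfer A B = (A', B')"
  shows "A' + B' = A + B"
proof -
  have "surplus A B + 1 \<le> count B (pivot A B)" by (rule pivot_surplus(2)[OF assms(1)])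
  then show ?thesis
    using assms(2) unfolding transfer_def Let_def
    by (auto intro!: multiset_eqI simp: count_replicate_mset)
qed

lemma transfer_size:
  assumes "deficient A B" and tr: "transfer A B = (A', B')"
  shows "int (size A') - int (size B') = int (size A) - int (size B) + 2"
proof -
  define v where "v = pivot A B"
  note L = transfer_local[OF tr v_def]
  have "gt_count A' v = gt_count B v" "gt_count B' v = gt_count A v"
    using L(1,2) unfolding gt_count_def by simp_all
  moreover have "size (filter_mset (\<lambda>x. x < v) A') = size (filter_mset (\<lambda>x. x < v) A)"
    "size (filter_mset (\<lambda>x. x < v) B') = size (filter_mset (\<lambda>x. x < v) B)"
    using L(3,4) by simp_all
  ultimately show ?thesis
    using size_split_at[of A' v] size_split_at[of B' v] size_split_at[of A v] size_split_at[of B v]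
      L(5,6) pivot_surplus[OF assms(1)] unfolding surplus_def v_def by simp
qed

lemma transfer_swap_pivot:
  assumes def: "deficient A B" and tr: "transfer A B = (A', B')"
  shows "deficient B' A'" and "pivot B' A' = pivot A B" and "surplus B' A' = surplus A B"
proof -
  define v where "v = pivot A B"
  note L = transfer_local[OF tr v_def]
  have gt: "gt_count A' v = gt_count B v" "gt_count B' v = gt_count A v"
    using L(1,2) unfolding gt_count_def by simp_all
  have "shift_excess B' A' v < 0"
    using gt L(5) pivot_surplus(1)[OF def] unfolding shift_excess_def ge_count_eq surplus_def v_def
    by simp
  then show def': "deficient B' A'" unfolding deficient_def by blast
  have "\<not> v < pivot B' A'"
  proof
    assume "v < pivot B' A'"
    then have "shift_excess A B (pivot B' A') < 0"
      using L(7) pivot_deficit[OF def'] by simp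
    then show False using pivot_greatest \<open>v < pivot B' A'\<close> v_def by fastforce
  qed
  then show pv: "pivot B' A' = pivot A B"
    using pivot_greatest[OF \<open>shift_excess B' A' v < 0\<close>] v_def by simp
  show "surplus B' A' = surplus A B" unfolding surplus_def pv gt[unfolded v_def] ..
qed

lemma transfer_involution:
  assumes def: "deficient A B" and tr: "transfer A B = (A', B')"
  shows "transfer B' A' = (B, A)"
proof -
  define v where "v = pivot A B"
  note L = transfer_local[OF tr v_def]
  have cnt: "count B' v + surplus A B + 1 = count B v" "count A' v - (surplus A B + 1) = count A v"
    using L(5,6) pivot_surplus(2)[OF def] unfolding v_def by auto
  have "transfer B' A' =
      (filter_mset (\<lambda>x. v < x) A' + filter_mset (\<lambda>x. x < v) B' + replicate_mset (count B' v + surplus A B + 1) v,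
       filter_mset (\<lambda>x. v < x) B' + filter_mset (\<lambda>x. x < v) A' + replicate_mset (count A' v - (surplus A B + 1)) v)"
    unfolding transfer_def Let_def transfer_swap_pivot[OF def tr] v_def ..
  also have "\<dots> = (B, A)"
    unfolding cnt L(1-4) by (simp only: mset_split_at[of A v, symmetric] mset_split_at[of B v, symmetric])
  finally show ?thesis .
qed


section \<open>Strict shifted pairs as non-deficient pairs\<close>

definition desc :: "nat multiset \<Rightarrow> nat list" where
  "desc M = rev (sorted_list_of_multiset M)"

lemma desc_sorted: "sorted_wrt (\<ge>) (desc M)"
  unfolding desc_def sorted_wrt_rev by (metis sorted_sorted_list_of_multiset sorted_wrt_mono_rel)

lemma mset_desc [simp]: "mset (desc M) = M"
  unfolding desc_def by simp

lemma set_desc [simp]: "set (desc M) = set_mset M"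
  by (metis mset_desc set_mset_mset)

lemma desc_mset:
  assumes "sorted_wrt (\<ge>) xs"
  shows "desc (mset xs) = xs"
proof -
  have "sorted (rev xs)" unfolding sorted_wrt_rev using assms by (metis sorted_wrt_mono_rel)
  then have "sort xs = rev xs" by (intro properties_for_sort) auto
  then show ?thesis unfolding desc_def by simp
qed

lemma count_dominance_Cons:
  fixes x y :: nat
  assumes sx: "sorted_wrt (\<ge>) (x # xs)" and sy: "sorted_wrt (\<ge>) (y # ys)"
  shows "(\<forall>v. length (filter (\<lambda>z. v \<le> z) (y # ys)) \<le> length (filter (\<lambda>z. v < z) (x # xs))) \<longleftrightarrow>
         y < x \<and> (\<forall>v. length (filter (\<lambda>z. v \<le> z) ys) \<le> length (filter (\<lambda>z. v < z) xs))"
proof -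
  have above_y: "filter (\<lambda>z. v \<le> z) ys = []" if "y < v" for v
    using sy that by (auto simp: filter_empty_conv)
  have above_x: "filter (\<lambda>z. v < z) xs = []" if "x \<le> v" for v
    using sx that by (auto simp: filter_empty_conv)
  show ?thesis
  proof
    assume H: "\<forall>v. length (filter (\<lambda>z. v \<le> z) (y # ys)) \<le> length (filter (\<lambda>z. v < z) (x # xs))"
    have "y < x"
      using H[rule_format, of y] above_x[of y] by (cases "y < x") auto
    moreover have "length (filter (\<lambda>z. v \<le> z) ys) \<le> length (filter (\<lambda>z. v < z) xs)" for v
      using H[rule_format, of v] above_y[of v] \<open>y < x\<close> by (cases "v \<le> y") auto
    ultimately show "y < x \<and> (\<forall>v. length (filter (\<lambda>z. v \<le> z) ys) \<le> length (filter (\<lambda>z. v < z) xs))"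
      by blast
  next
    assume H: "y < x \<and> (\<forall>v. length (filter (\<lambda>z. v \<le> z) ys) \<le> length (filter (\<lambda>z. v < z) xs))"
    show "\<forall>v. length (filter (\<lambda>z. v \<le> z) (y # ys)) \<le> length (filter (\<lambda>z. v < z) (x # xs))"
    proof
      fix v
      show "length (filter (\<lambda>z. v \<le> z) (y # ys)) \<le> length (filter (\<lambda>z. v < z) (x # xs))"
        using H above_y[of v] by (cases "v \<le> y") auto
    qed
  qed
qed

lemma entrywise_below_iff_counts:
  fixes xs ys :: "nat list"
  assumes "sorted_wrt (\<ge>) xs" and "sorted_wrt (\<ge>) ys"
  shows "(length ys \<le> length xs \<and> (\<forall>i<length ys. ys ! i < xs ! i)) \<longleftrightarrow>
         (\<forall>v. length (filter (\<lambda>y. v \<le> y) ys) \<le> length (filter (\<lambda>x. v < x) xs))"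
  using assms
proof (induction ys arbitrary: xs)
  case Nil
  then show ?case by simp
next
  case (Cons y ys)
  show ?case
  proof (cases xs)
    case Nil
    then show ?thesis by (auto intro: exI[of _ y])
  next
    case (Cons x xs')
    have sorted: "sorted_wrt (\<ge>) (x # xs')" "sorted_wrt (\<ge>) (y # ys)"
      using Cons.prems unfolding Cons by auto
    have "(length (y # ys) \<le> length xs \<and> (\<forall>i<length (y # ys). (y # ys) ! i < xs ! i)) \<longleftrightarrow>
        y < x \<and> (length ys \<le> length xs' \<and> (\<forall>i<length ys. ys ! i < xs' ! i))"
      unfolding Cons by (auto simp: All_less_Suc2)
    also have "\<dots> \<longleftrightarrow> y < x \<and> (\<forall>v. length (filter (\<lambda>z. v \<le> z) ys) \<le> length (filter (\<lambda>z. v < z) xs'))"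
      using Cons.IH sorted by simp
    also have "\<dots> \<longleftrightarrow> (\<forall>v. length (filter (\<lambda>z. v \<le> z) (y # ys)) \<le> length (filter (\<lambda>z. v < z) xs))"
      unfolding Cons by (rule count_dominance_Cons[OF sorted, symmetric])
    finally show ?thesis .
  qed
qed

lemma size_filter_mset_mset: "size (filter_mset P (mset xs)) = length (filter P xs)"
  by (metis mset_filter size_mset)

lemma strict_shifted_iff_not_deficient:
  assumes "sorted_wrt (\<ge>) xs" and "sorted_wrt (\<ge>) ys"
  shows "strict_shifted (a # xs) ys \<longleftrightarrow> \<not> deficient (mset xs) (mset ys)"
proof -
  have "strict_shifted (a # xs) ys \<longleftrightarrow> (length ys \<le> length xs \<and> (\<forall>i<length ys. ys ! i < xs ! i))"
    unfolding strict_shifted_def by auto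
  also have "\<dots> \<longleftrightarrow> (\<forall>v. length (filter (\<lambda>y. v \<le> y) ys) \<le> length (filter (\<lambda>x. v < x) xs))"
    by (rule entrywise_below_iff_counts[OF assms])
  also have "\<dots> \<longleftrightarrow> \<not> deficient (mset xs) (mset ys)"
    unfolding deficient_def shift_excess_def gt_count_def ge_count_def size_filter_mset_mset
    by (auto simp: not_less)
  finally show ?thesis .
qed


section \<open>Replacing one vector of a marked Durfee symbol\<close>

lemma is_partition_Cons: "is_partition (a # xs) \<longleftrightarrow> (\<forall>p\<in>set xs. p \<le> a) \<and> 0 < a \<and> is_partition xs"
  unfolding is_partition_def by auto

lemma is_partition_le_hd: "is_partition xs \<Longrightarrow> p \<in> set xs \<Longrightarrow> p \<le> hd xs"
  by (cases xs) (auto simp: is_partition_def)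

lemma is_partition_desc: "is_partition (desc M) \<longleftrightarrow> (\<forall>p\<in>#M. 0 < p)"
  unfolding is_partition_def using desc_sorted by auto

text \<open>A non-final vector may be replaced by any pair of partitions with the same largest part
  of alpha and the same multiset of parts: all conditions of a marked Durfee symbol only refer to
  these data.\<close>
lemma kmds_replace_vector:
  assumes K: "is_kmds k n (D, as, bs)" and J: "J + 1 < k"
    and pa: "is_partition \<alpha>" and pb: "is_partition \<beta>" and ne: "\<alpha> \<noteq> []"
    and hd: "hd \<alpha> = hd (as ! J)"
    and parts: "mset \<alpha> + mset \<beta> = mset (as ! J) + mset (bs ! J)"
  shows "is_kmds k n (D, as[J := \<alpha>], bs[J := \<beta>])"
proof -
  from K have len: "length as = k" "length bs = k"
    and part: "\<forall>i<k. is_partition (as ! i) \<and> is_partition (bs ! i)"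
    and nemp: "\<forall>i. i + 1 < k \<longrightarrow> as ! i \<noteq> []"
    and bhd: "\<forall>i. i + 1 < k \<longrightarrow> (\<forall>p\<in>set (bs ! i). p \<le> hd (as ! i))"
    and low: "\<forall>i. 1 \<le> i \<and> i < k \<longrightarrow> (\<forall>p\<in>set (as ! i) \<union> set (bs ! i). hd (as ! (i - 1)) \<le> p)"
    and up: "\<forall>p\<in>set (as ! (k - 1)) \<union> set (bs ! (k - 1)). p \<le> D"
    and weight: "(\<Sum>i<k. sum_list (as ! i) + sum_list (bs ! i)) + D ^ 2 = n"
    unfolding is_kmds_def by auto
  have same_set: "set \<alpha> \<union> set \<beta> = set (as ! J) \<union> set (bs ! J)"
    using arg_cong[OF parts, of set_mset] by simp
  have "\<forall>p\<in>set (as ! J) \<union> set (bs ! J). p \<le> hd (as ! J)"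
    using is_partition_le_hd part bhd J by auto
  then have bhd': "\<forall>p\<in>set \<beta>. p \<le> hd \<alpha>" using same_set hd by auto
  have "sum_list \<alpha> + sum_list \<beta> = sum_list (as ! J) + sum_list (bs ! J)"
    using arg_cong[OF parts, of sum_mset] by (simp add: sum_mset_sum_list)
  then have weight': "(\<Sum>i<k. sum_list (as[J := \<alpha>] ! i) + sum_list (bs[J := \<beta>] ! i)) =
      (\<Sum>i<k. sum_list (as ! i) + sum_list (bs ! i))"
  proof (intro sum.cong refl)
    fix i assume "i \<in> {..<k}"
    then show "sum_list (as[J := \<alpha>] ! i) + sum_list (bs[J := \<beta>] ! i) =
        sum_list (as ! i) + sum_list (bs ! i)"
      using \<open>sum_list \<alpha> + sum_list \<beta> = _\<close> len by (cases "i = J") auto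
  qed
  show ?thesis unfolding is_kmds_def prod.case
  proof (intro conjI allI impI ballI)
    fix i assume "i < k"
    then show "is_partition (as[J := \<alpha>] ! i)" "is_partition (bs[J := \<beta>] ! i)"
      using part pa pb len by (cases "i = J"; simp)+
  next
    fix i assume "i + 1 < k"
    then show "as[J := \<alpha>] ! i \<noteq> []" using nemp ne len by (cases "i = J") auto
  next
    fix i p assume "i + 1 < k" "p \<in> set (bs[J := \<beta>] ! i)"
    then show "p \<le> hd (as[J := \<alpha>] ! i)" using bhd bhd' len by (cases "i = J") auto
  next
    fix i p assume i: "1 \<le> i \<and> i < k" and p: "p \<in> set (as[J := \<alpha>] ! i) \<union> set (bs[J := \<beta>] ! i)"
    have "hd (as[J := \<alpha>] ! (i - 1)) = hd (as ! (i - 1))"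
      using hd len i by (cases "i - 1 = J") auto
    moreover have "p \<in> set (as ! i) \<union> set (bs ! i)"
      using p same_set len i by (cases "i = J") auto
    ultimately show "hd (as[J := \<alpha>] ! (i - 1)) \<le> p" using low i by auto
  next
    fix p assume "p \<in> set (as[J := \<alpha>] ! (k - 1)) \<union> set (bs[J := \<beta>] ! (k - 1))"
    then show "p \<le> D" using up J by auto
  qed (use len weight weight' in auto)
qed

lemma ranks_replace_vector:
  assumes "J < k" "length as = k" "length bs = k"
  shows "dsym_ranks k (D, as[J := \<alpha>], bs[J := \<beta>]) =
    (dsym_ranks k (D, as, bs))[J := (if J + 1 < k then int (length \<alpha>) - int (length \<beta>) - 1
                                     else int (length \<alpha>) - int (length \<beta>))]"
  using assms unfolding dsym_ranks_def
  by (intro nth_equalityI) (auto simp: dsym_rank_def nth_list_update)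

lemma nonfinal_vector:
  assumes K: "is_kmds k n (D, as, bs)" and J: "J + 1 < k"
  shows "as ! J = hd (as ! J) # tl (as ! J)" and "0 < hd (as ! J)"
    and "sorted_wrt (\<ge>) (tl (as ! J))" and "sorted_wrt (\<ge>) (bs ! J)"
    and "\<forall>p\<in>set (tl (as ! J)) \<union> set (bs ! J). p \<le> hd (as ! J) \<and> 0 < p"
    and "length as = k" and "length bs = k"
proof -
  from K J have ne: "as ! J \<noteq> []" and pa: "is_partition (as ! J)" and pb: "is_partition (bs ! J)"
    and bh: "\<forall>p\<in>set (bs ! J). p \<le> hd (as ! J)" and "length as = k" "length bs = k"
    unfolding is_kmds_def by auto
  then show eq: "as ! J = hd (as ! J) # tl (as ! J)" and "length as = k" "length bs = k" by simp_all
  have pc: "is_partition (hd (as ! J) # tl (as ! J))" using pa eq by simp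
  then show "sorted_wrt (\<ge>) (tl (as ! J))" "0 < hd (as ! J)"
    unfolding is_partition_Cons is_partition_def by auto
  show "sorted_wrt (\<ge>) (bs ! J)" using pb unfolding is_partition_def by auto
  show "\<forall>p\<in>set (tl (as ! J)) \<union> set (bs ! J). p \<le> hd (as ! J) \<and> 0 < p"
    using pc pb bh unfolding is_partition_Cons by (auto simp: is_partition_def)
qed

lemma rank_nonfinal:
  assumes K: "is_kmds k n (D, as, bs)" and J: "J + 1 < k"
  shows "dsym_ranks k (D, as, bs) ! J = int (length (tl (as ! J))) - int (length (bs ! J))"
  using nonfinal_vector(1)[OF K J] J unfolding dsym_ranks_def dsym_rank_def
  by (cases "as ! J") auto

definition ss_at :: "nat \<Rightarrow> dsym \<Rightarrow> bool" where
  "ss_at J \<eta> = (case \<eta> of (D, as, bs) \<Rightarrow> strict_shifted (as ! J) (bs ! J))"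

definition ss_prefix :: "nat \<Rightarrow> dsym \<Rightarrow> bool" where
  "ss_prefix J \<eta> \<longleftrightarrow> (\<forall>i<J. ss_at i \<eta>)"

lemma ss_at_iff_not_deficient:
  assumes K: "is_kmds k n (D, as, bs)" and J: "J + 1 < k"
  shows "ss_at J (D, as, bs) \<longleftrightarrow> \<not> deficient (mset (tl (as ! J))) (mset (bs ! J))"
  using strict_shifted_iff_not_deficient[OF nonfinal_vector(3,4)[OF K J]] nonfinal_vector(1)[OF K J]
  unfolding ss_at_def by (metis prod.case)

definition revise_vector ::
    "nat \<Rightarrow> (nat multiset \<Rightarrow> nat multiset \<Rightarrow> nat multiset \<times> nat multiset) \<Rightarrow> dsym \<Rightarrow> dsym" where
  "revise_vector J f \<eta> = (case \<eta> of (D, as, bs) \<Rightarrow>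
     (case f (mset (tl (as ! J))) (mset (bs ! J)) of (X, Y) \<Rightarrow>
        (D, as[J := hd (as ! J) # desc X], bs[J := desc Y])))"

lemma revise_vector_eq:
  "f (mset (tl (as ! J))) (mset (bs ! J)) = (X, Y) \<Longrightarrow>
   revise_vector J f (D, as, bs) = (D, as[J := hd (as ! J) # desc X], bs[J := desc Y])"
  by (simp add: revise_vector_def)

lemma ss_prefix_revise_vector: "ss_prefix J (revise_vector J f \<eta>) = ss_prefix J \<eta>"
proof -
  obtain D as bs where \<eta>: "\<eta> = (D, as, bs)" by (cases \<eta>)
  obtain X Y where "f (mset (tl (as ! J))) (mset (bs ! J)) = (X, Y)" by fastforce
  then show ?thesis unfolding \<eta> ss_prefix_def ss_at_def by (simp add: revise_vector_eq)
qed

lemma revise_vector_valid: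
  assumes K: "is_kmds k n (D, as, bs)" and J: "J + 1 < k"
    and f: "f (mset (tl (as ! J))) (mset (bs ! J)) = (X, Y)"
    and XY: "X + Y = mset (tl (as ! J)) + mset (bs ! J)"
  shows "is_kmds k n (revise_vector J f (D, as, bs))"
    and "dsym_ranks k (revise_vector J f (D, as, bs)) =
           (dsym_ranks k (D, as, bs))[J := int (size X) - int (size Y)]"
proof -
  note V = nonfinal_vector[OF K J]
  have pos: "\<forall>p\<in>#X + Y. p \<le> hd (as ! J) \<and> 0 < p" using XY V(5) by auto
  show "is_kmds k n (revise_vector J f (D, as, bs))"
    unfolding revise_vector_eq[where f = f, OF f]
  proof (rule kmds_replace_vector[OF K J])
    show "is_partition (hd (as ! J) # desc X)"
      unfolding is_partition_Cons is_partition_desc using pos V(2) by auto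
    show "is_partition (desc Y)" unfolding is_partition_desc using pos by auto
    show "mset (hd (as ! J) # desc X) + mset (desc Y) = mset (as ! J) + mset (bs ! J)"
      using XY V(1) by (metis add_mset_add_single mset.simps(2) mset_desc union_assoc union_commute)
  qed simp_all
  show "dsym_ranks k (revise_vector J f (D, as, bs)) =
      (dsym_ranks k (D, as, bs))[J := int (size X) - int (size Y)]"
    unfolding revise_vector_eq[where f = f, OF f] using ranks_replace_vector[of J k as bs] J V(6,7)
    by (simp add: size_mset[symmetric] del: size_mset)
qed

lemma revise_vector_inverse:
  assumes K: "is_kmds k n (D, as, bs)" and J: "J + 1 < k"
    and f: "f (mset (tl (as ! J))) (mset (bs ! J)) = (X, Y)"
    and g: "g X Y = (mset (tl (as ! J)), mset (bs ! J))"
  shows "revise_vector J g (revise_vector J f (D, as, bs)) = (D, as, bs)"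
proof -
  note V = nonfinal_vector[OF K J]
  have g': "g (mset (tl (as[J := hd (as ! J) # desc X] ! J))) (mset (bs[J := desc Y] ! J)) =
      (mset (tl (as ! J)), mset (bs ! J))"
    using g J V(6,7) by simp
  have "revise_vector J g (revise_vector J f (D, as, bs)) =
      (D, as[J := hd (as ! J) # desc (mset (tl (as ! J)))], bs[J := desc (mset (bs ! J))])"
    unfolding revise_vector_eq[where f = f, OF f] revise_vector_eq[where f = g, OF g']
    using J V(6,7) by simp
  also have "\<dots> = (D, as, bs)"
    unfolding desc_mset[OF V(3)] desc_mset[OF V(4)] using V(1) by (metis list_update_id)
  finally show ?thesis .
qed

text \<open>The transfer raises the J-th rank by 2; the transfer of the swapped pair lowers it.\<close>
definition raise_rank :: "nat \<Rightarrow> dsym \<Rightarrow> dsym" where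
  "raise_rank J = revise_vector J transfer"

definition lower_rank :: "nat \<Rightarrow> dsym \<Rightarrow> dsym" where
  "lower_rank J = revise_vector J (\<lambda>A B. prod.swap (transfer B A))"

lemma raise_rank_props:
  assumes K: "is_kmds k n (D, as, bs)" and J: "J + 1 < k" and ns: "\<not> ss_at J (D, as, bs)"
  shows "is_kmds k n (raise_rank J (D, as, bs))"
    and "dsym_ranks k (raise_rank J (D, as, bs)) =
           (dsym_ranks k (D, as, bs))[J := dsym_ranks k (D, as, bs) ! J + 2]"
    and "lower_rank J (raise_rank J (D, as, bs)) = (D, as, bs)"
proof -
  define A B where "A = mset (tl (as ! J))" and "B = mset (bs ! J)"
  obtain X Y where tr: "transfer A B = (X, Y)" by fastforce
  have def: "deficient A B" using ns ss_at_iff_not_deficient[OF K J] A_def B_def by simp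
  have XY: "X + Y = A + B" by (rule transfer_union[OF def tr])
  show "is_kmds k n (raise_rank J (D, as, bs))"
    using revise_vector_valid(1)[of k n D as bs J transfer X Y] K J tr XY
    unfolding raise_rank_def A_def B_def by simp
  have "int (size X) - int (size Y) = dsym_ranks k (D, as, bs) ! J + 2"
    using transfer_size[OF def tr] rank_nonfinal[OF K J] unfolding A_def B_def by simp
  then show "dsym_ranks k (raise_rank J (D, as, bs)) =
      (dsym_ranks k (D, as, bs))[J := dsym_ranks k (D, as, bs) ! J + 2]"
    using revise_vector_valid(2)[of k n D as bs J transfer X Y] K J tr XY
    unfolding raise_rank_def A_def B_def by simp
  show "lower_rank J (raise_rank J (D, as, bs)) = (D, as, bs)"
    using revise_vector_inverse[OF K J, of transfer X Y] tr transfer_involution[OF def tr]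
    unfolding raise_rank_def lower_rank_def A_def B_def by simp
qed

lemma lower_rank_props:
  assumes K: "is_kmds k n (D, as, bs)" and J: "J + 1 < k" and r: "dsym_ranks k (D, as, bs) ! J \<ge> 2"
  shows "is_kmds k n (lower_rank J (D, as, bs))"
    and "dsym_ranks k (lower_rank J (D, as, bs)) =
           (dsym_ranks k (D, as, bs))[J := dsym_ranks k (D, as, bs) ! J - 2]"
    and "raise_rank J (lower_rank J (D, as, bs)) = (D, as, bs)"
    and "\<not> ss_at J (lower_rank J (D, as, bs))"
proof -
  define A B where "A = mset (tl (as ! J))" and "B = mset (bs ! J)"
  define f where "f = (\<lambda>A B. prod.swap (transfer B A))"
  obtain Y X where tr: "transfer B A = (Y, X)" by fastforce
  have fAB: "f A B = (X, Y)" unfolding f_def tr by simp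
  have "size B < size A" using r rank_nonfinal[OF K J] unfolding A_def B_def by simp
  then have def: "deficient B A" by (rule deficient_if_size_less)
  have XY: "X + Y = A + B" using transfer_union[OF def tr] by (simp add: add.commute)
  show "is_kmds k n (lower_rank J (D, as, bs))"
    using revise_vector_valid(1)[of k n D as bs J f X Y] K J fAB XY
    unfolding lower_rank_def f_def A_def B_def by simp
  have "int (size X) - int (size Y) = dsym_ranks k (D, as, bs) ! J - 2"
    using transfer_size[OF def tr] rank_nonfinal[OF K J] unfolding A_def B_def by simp
  then show "dsym_ranks k (lower_rank J (D, as, bs)) =
      (dsym_ranks k (D, as, bs))[J := dsym_ranks k (D, as, bs) ! J - 2]"
    using revise_vector_valid(2)[of k n D as bs J f X Y] K J fAB XY
    unfolding lower_rank_def f_def A_def B_def by simp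
  show "raise_rank J (lower_rank J (D, as, bs)) = (D, as, bs)"
    using revise_vector_inverse[OF K J, of f X Y transfer] fAB transfer_involution[OF def tr]
    unfolding raise_rank_def lower_rank_def f_def A_def B_def by simp
  have "deficient X Y" by (rule transfer_swap_pivot(1)[OF def tr])
  then show "\<not> ss_at J (lower_rank J (D, as, bs))"
    using revise_vector_eq[of f as J bs X Y D] fAB J nonfinal_vector(6,7)[OF K J]
      strict_shifted_iff_not_deficient[OF desc_sorted desc_sorted, of "hd (as ! J)" X Y]
    unfolding lower_rank_def ss_at_def f_def A_def B_def by simp
qed


section \<open>Finiteness and the bound on ranks\<close>

lemma length_le_sum_list: "(\<forall>p\<in>set xs. 0 < p) \<Longrightarrow> length xs \<le> sum_list (xs :: nat list)"
  by (induction xs) auto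

lemma kmds_bounds:
  assumes K: "is_kmds k n (D, as, bs)" and i: "i < k"
  shows "length (as ! i) \<le> n" and "set (as ! i) \<subseteq> {..n}"
    and "length (bs ! i) \<le> n" and "set (bs ! i) \<subseteq> {..n}"
proof -
  from K have weight: "(\<Sum>i<k. sum_list (as ! i) + sum_list (bs ! i)) + D ^ 2 = n"
    and pa: "is_partition (as ! i)" and pb: "is_partition (bs ! i)"
    unfolding is_kmds_def using i by auto
  have "sum_list (as ! i) + sum_list (bs ! i) \<le> (\<Sum>i<k. sum_list (as ! i) + sum_list (bs ! i))"
    by (rule member_le_sum) (use i in auto)
  then have sa: "sum_list (as ! i) \<le> n" and sb: "sum_list (bs ! i) \<le> n" using weight by auto
  show "length (as ! i) \<le> n" "length (bs ! i) \<le> n"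
    using length_le_sum_list[of "as ! i"] length_le_sum_list[of "bs ! i"] pa pb sa sb
    unfolding is_partition_def by auto
  show "set (as ! i) \<subseteq> {..n}" "set (bs ! i) \<subseteq> {..n}"
    using sa sb member_le_sum_list[of _ "as ! i"] member_le_sum_list[of _ "bs ! i"] by fastforce+
qed

lemma kmds_durfee_le:
  assumes "is_kmds k n (D, as, bs)"
  shows "D \<le> n"
proof -
  have "D ^ 2 \<le> n" using assms unfolding is_kmds_def by auto
  moreover have "D \<le> D ^ 2" by (simp add: power2_eq_square le_square)
  ultimately show ?thesis by simp
qed

lemma finite_kmds: "finite {\<eta>. is_kmds k n \<eta>}"
proof -
  define P where "P = {xs :: nat list. set xs \<subseteq> {..n} \<and> length xs \<le> n}"
  define Q where "Q = {xss. set xss \<subseteq> P \<and> length xss = k}"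
  have "finite P" unfolding P_def by (rule finite_lists_length_le) simp
  then have "finite Q" unfolding Q_def by (rule finite_lists_length_eq)
  moreover have "{\<eta>. is_kmds k n \<eta>} \<subseteq> {..n} \<times> Q \<times> Q"
  proof
    fix \<eta> assume "\<eta> \<in> {\<eta>. is_kmds k n \<eta>}"
    then obtain D as bs where \<eta>: "\<eta> = (D, as, bs)" and K: "is_kmds k n (D, as, bs)"
      by (cases \<eta>) auto
    have len: "length as = k" "length bs = k" using K unfolding is_kmds_def by auto
    have "as ! i \<in> P \<and> bs ! i \<in> P" if "i < k" for i
      using kmds_bounds[OF K that] unfolding P_def by simp
    then have "set as \<subseteq> P" "set bs \<subseteq> P" using len by (auto simp: in_set_conv_nth)
    moreover have "D \<le> n" by (rule kmds_durfee_le[OF K])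
    ultimately show "\<eta> \<in> {..n} \<times> Q \<times> Q" unfolding \<eta> Q_def using len by simp
  qed
  ultimately show ?thesis by (meson finite_SigmaI finite_atMost finite_subset)
qed

lemma rank_le_weight:
  assumes K: "is_kmds k n (D, as, bs)" and i: "i < k"
  shows "dsym_ranks k (D, as, bs) ! i \<le> int n"
  using kmds_bounds(1)[OF K i] i unfolding dsym_ranks_def dsym_rank_def by auto


section \<open>The recursion for symbols with a strict shifted prefix\<close>

definition ss_upto :: "nat \<Rightarrow> nat \<Rightarrow> nat list \<Rightarrow> nat \<Rightarrow> dsym set" where
  "ss_upto k n ms J = {\<eta>. is_kmds k n \<eta> \<and> dsym_ranks k \<eta> = map int ms \<and> ss_prefix J \<eta>}"

lemma finite_ss_upto: "finite (ss_upto k n ms J)"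
  by (rule finite_subset[OF _ finite_kmds]) (auto simp: ss_upto_def)

lemma ss_upto_empty:
  assumes "length ms = k" and "i < k" and "n < ms ! i"
  shows "ss_upto k n ms J = {}"
proof -
  have "\<not> is_kmds k n (D, as, bs) \<or> dsym_ranks k (D, as, bs) \<noteq> map int ms" for D as bs
    using rank_le_weight[of k n D as bs i] assms by auto
  then show ?thesis unfolding ss_upto_def by auto
qed

lemma raise_rank_into:
  assumes J: "J + 1 < k" and L: "length ms = k"
    and \<eta>: "\<eta> \<in> ss_upto k n ms J" and ns: "\<not> ss_at J \<eta>"
  shows "raise_rank J \<eta> \<in> ss_upto k n (ms[J := ms ! J + 2]) J"
    and "lower_rank J (raise_rank J \<eta>) = \<eta>"
proof -
  obtain D as bs where e: "\<eta> = (D, as, bs)" by (cases \<eta>)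
  have K: "is_kmds k n (D, as, bs)" and r: "dsym_ranks k (D, as, bs) = map int ms"
    using \<eta> unfolding e ss_upto_def by auto
  note R = raise_rank_props[OF K J ns[unfolded e]]
  have "dsym_ranks k (raise_rank J \<eta>) = map int (ms[J := ms ! J + 2])"
    using R(2) r L J unfolding e by (simp add: map_update add.commute)
  then show "raise_rank J \<eta> \<in> ss_upto k n (ms[J := ms ! J + 2]) J"
    using R(1) \<eta> ss_prefix_revise_vector unfolding e ss_upto_def raise_rank_def by simp
  show "lower_rank J (raise_rank J \<eta>) = \<eta>" using R(3) unfolding e .
qed

lemma lower_rank_into:
  assumes J: "J + 1 < k" and L: "length ms = k"
    and \<eta>: "\<eta> \<in> ss_upto k n (ms[J := ms ! J + 2]) J"
  shows "lower_rank J \<eta> \<in> ss_upto k n ms J" and "\<not> ss_at J (lower_rank J \<eta>)"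
    and "raise_rank J (lower_rank J \<eta>) = \<eta>"
proof -
  obtain D as bs where e: "\<eta> = (D, as, bs)" by (cases \<eta>)
  have K: "is_kmds k n (D, as, bs)" and r: "dsym_ranks k (D, as, bs) = map int (ms[J := ms ! J + 2])"
    using \<eta> unfolding e ss_upto_def by auto
  have r2: "dsym_ranks k (D, as, bs) ! J \<ge> 2" using r L J by simp
  note R = lower_rank_props[OF K J r2]
  have "dsym_ranks k (lower_rank J \<eta>) = (map int (ms[J := ms ! J + 2]))[J := int (ms ! J)]"
    using R(2) r L J unfolding e by simp
  also have "\<dots> = map int ms" using L J by (simp add: map_update list_update_same_conv)
  finally show "lower_rank J \<eta> \<in> ss_upto k n ms J"
    using R(1) \<eta> ss_prefix_revise_vector unfolding e ss_upto_def lower_rank_def by simp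
  show "\<not> ss_at J (lower_rank J \<eta>)" using R(4) unfolding e .
  show "raise_rank J (lower_rank J \<eta>) = \<eta>" using R(3) unfolding e .
qed

text \<open>The key recursion: a symbol in ss_upto J either has a strict shifted J-th vector, or it
  is mapped bijectively by raise_rank onto the symbols whose J-th rank is larger by 2.\<close>
lemma ss_upto_recursion:
  assumes J: "J + 1 < k" and L: "length ms = k"
  shows "card (ss_upto k n ms J) =
           card (ss_upto k n ms (Suc J)) + card (ss_upto k n (ms[J := ms ! J + 2]) J)"
proof -
  define X where "X = {\<eta> \<in> ss_upto k n ms J. \<not> ss_at J \<eta>}"
  have split: "ss_upto k n ms J = ss_upto k n ms (Suc J) \<union> X"
    and disj: "ss_upto k n ms (Suc J) \<inter> X = {}"
    unfolding X_def ss_upto_def ss_prefix_def by (auto simp: less_Suc_eq)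
  have "finite (ss_upto k n ms (Suc J))" "finite X" using finite_ss_upto[of k n ms J] split by auto
  then have "card (ss_upto k n ms J) = card (ss_upto k n ms (Suc J)) + card X"
    unfolding split using disj by (rule card_Un_disjoint)
  moreover have "bij_betw (raise_rank J) X (ss_upto k n (ms[J := ms ! J + 2]) J)"
  proof (rule bij_betw_byWitness[where f' = "lower_rank J"])
    show "\<forall>\<eta>\<in>X. lower_rank J (raise_rank J \<eta>) = \<eta>"
      using raise_rank_into(2)[OF J L] unfolding X_def by blast
    show "\<forall>\<eta>\<in>ss_upto k n (ms[J := ms ! J + 2]) J. raise_rank J (lower_rank J \<eta>) = \<eta>"
      using lower_rank_into(3)[OF J L] by blast
    show "raise_rank J ` X \<subseteq> ss_upto k n (ms[J := ms ! J + 2]) J"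
      using raise_rank_into(1)[OF J L] unfolding X_def by blast
    show "lower_rank J ` ss_upto k n (ms[J := ms ! J + 2]) J \<subseteq> X"
      using lower_rank_into(1,2)[OF J L] unfolding X_def by blast
  qed
  ultimately show ?thesis by (simp add: bij_betw_same_card)
qed


lemma ss_upto_unfold:
  assumes J: "J + 1 < k" and L: "length ms = k"
  shows "card (ss_upto k n ms J) =
           (\<Sum>t<N. card (ss_upto k n (ms[J := ms ! J + 2 * t]) (Suc J)))
           + card (ss_upto k n (ms[J := ms ! J + 2 * N]) J)"
proof (induction N)
  case 0
  then show ?case by simp
next
  case (Suc N)
  define ms' where "ms' = ms[J := ms ! J + 2 * N]"
  have "length ms' = k" and "ms' ! J = ms ! J + 2 * N" using L J unfolding ms'_def by auto
  then have "card (ss_upto k n ms' J) =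
      card (ss_upto k n ms' (Suc J)) + card (ss_upto k n (ms[J := ms ! J + 2 * Suc N]) J)"
    using ss_upto_recursion[OF J, of ms' n] unfolding ms'_def by (simp add: algebra_simps)
  then show ?case using Suc.IH unfolding ms'_def by simp
qed

text \<open>Since ranks are at most n, the recursion terminates after n + 1 steps.\<close>
lemma ss_upto_sum:
  assumes J: "J + 1 < k" and L: "length ms = k"
  shows "card (ss_upto k n ms J) = (\<Sum>t<Suc n. card (ss_upto k n (ms[J := ms ! J + 2 * t]) (Suc J)))"
proof -
  have "ss_upto k n (ms[J := ms ! J + 2 * Suc n]) J = {}"
    by (rule ss_upto_empty[of _ k J]) (use J L in auto)
  then show ?thesis using ss_upto_unfold[OF J L, of n "Suc n"] by simp
qed


section \<open>The multiple sum\<close>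

definition shifted_ranks :: "nat \<Rightarrow> nat \<Rightarrow> nat list \<Rightarrow> nat list \<Rightarrow> nat list" where
  "shifted_ranks k J t ms =
     map (\<lambda>i. if J \<le> i \<and> i < k - 1 then ms ! i + 2 * t ! (i - J) else ms ! i) [0..<k]"

definition bounded_lists :: "nat \<Rightarrow> nat \<Rightarrow> nat list set" where
  "bounded_lists N m = {t. set t \<subseteq> {..<N} \<and> length t = m}"

lemma finite_bounded_lists: "finite (bounded_lists N m)"
  unfolding bounded_lists_def by (rule finite_lists_length_eq) simp

lemma sum_bounded_lists_Suc:
  "sum f (bounded_lists N (Suc m)) = (\<Sum>x<N. \<Sum>t\<in>bounded_lists N m. f (x # t))"
proof -
  have im: "bounded_lists N (Suc m) = (\<lambda>(x, t). x # t) ` ({..<N} \<times> bounded_lists N m)"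
    unfolding bounded_lists_def by (auto simp: length_Suc_conv image_iff)
  have inj: "inj_on (\<lambda>(x, t). x # t) ({..<N} \<times> bounded_lists N m)"
    by (intro inj_onI) auto
  show ?thesis
    unfolding im sum.reindex[OF inj] by (simp add: sum.cartesian_product case_prod_beta)
qed

lemma shifted_ranks_Cons:
  assumes "J + 1 < k" and "length ms = k"
  shows "shifted_ranks k (Suc J) t (ms[J := ms ! J + 2 * x]) = shifted_ranks k J (x # t) ms"
  unfolding shifted_ranks_def
proof (rule map_cong[OF refl])
  fix i assume "i \<in> set [0..<k]"
  then show "(if Suc J \<le> i \<and> i < k - 1 then ms[J := ms ! J + 2 * x] ! i + 2 * t ! (i - Suc J)
          else ms[J := ms ! J + 2 * x] ! i) =
        (if J \<le> i \<and> i < k - 1 then ms ! i + 2 * (x # t) ! (i - J) else ms ! i)"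
    using assms by (cases "i = J"; cases "Suc J \<le> i") (auto simp: Suc_diff_Suc[symmetric] Suc_diff_le)
qed

lemma ss_upto_multisum:
  assumes "J + m = k - 1" and "length ms = k"
  shows "card (ss_upto k n ms J) =
           (\<Sum>t\<in>bounded_lists (Suc n) m. card (ss_upto k n (shifted_ranks k J t ms) (k - 1)))"
  using assms
proof (induction m arbitrary: J ms)
  case 0
  have "bounded_lists (Suc n) 0 = {[]}" unfolding bounded_lists_def by auto
  moreover have "shifted_ranks k J [] ms = ms"
    using 0 unfolding shifted_ranks_def by (intro nth_equalityI) auto
  ultimately show ?case using 0 by simp
next
  case (Suc m)
  have J: "J + 1 < k" using Suc.prems by simp
  have "card (ss_upto k n ms J) = (\<Sum>x<Suc n. card (ss_upto k n (ms[J := ms ! J + 2 * x]) (Suc J)))"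
    by (rule ss_upto_sum[OF J Suc.prems(2)])
  also have "\<dots> = (\<Sum>x<Suc n. \<Sum>t\<in>bounded_lists (Suc n) m.
                    card (ss_upto k n (shifted_ranks k J (x # t) ms) (k - 1)))"
    using Suc.IH[of "Suc J"] Suc.prems shifted_ranks_Cons[OF J Suc.prems(2)] by simp
  also have "\<dots> = (\<Sum>t\<in>bounded_lists (Suc n) (Suc m). card (ss_upto k n (shifted_ranks k J t ms) (k - 1)))"
    by (rule sum_bounded_lists_Suc[symmetric])
  finally show ?case .
qed

text \<open>Terms with an entry of t beyond n vanish: the corresponding rank exceeds n.\<close>
lemma ss_upto_shifted_empty:
  assumes "length ms = k" and "length t = k - 1" and "\<not> set t \<subseteq> {..<Suc n}"
  shows "ss_upto k n (shifted_ranks k 0 t ms) J = {}"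
proof -
  obtain x where "x \<in> set t" "n < x" using assms(3) by (auto simp: subset_iff not_less Suc_le_eq)
  then obtain i where i: "i < k - 1" "n < t ! i" using assms(2) by (auto simp: in_set_conv_nth)
  show ?thesis
  proof (rule ss_upto_empty)
    show "length (shifted_ranks k 0 t ms) = k" "i < k" using i unfolding shifted_ranks_def by auto
    show "n < shifted_ranks k 0 t ms ! i" using i unfolding shifted_ranks_def by simp
  qed
qed

lemma infsum_bounded_support:
  fixes f :: "nat list \<Rightarrow> 'a :: {topological_comm_monoid_add, t2_space}"
  assumes "\<And>t. length t = m \<Longrightarrow> \<not> set t \<subseteq> {..<N} \<Longrightarrow> f t = 0"
  shows "(\<Sum>\<^sub>\<infinity> t\<in>{t. length t = m}. f t) = (\<Sum>t\<in>bounded_lists N m. f t)"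
proof -
  have "(\<Sum>\<^sub>\<infinity> t\<in>{t. length t = m}. f t) = (\<Sum>\<^sub>\<infinity> t\<in>bounded_lists N m. f t)"
    using assms unfolding bounded_lists_def by (intro infsum_cong_neutral) auto
  then show ?thesis using finite_bounded_lists by simp
qed


lemma Dk_eq_ss_upto: "Dk k (map int ms) n = card (ss_upto k n ms 0)"
  unfolding Dk_def ss_upto_def ss_prefix_def by simp

lemma Dss_eq_ss_upto: "Dss k (map int ms) n = card (ss_upto k n ms (k - 1))"
  unfolding Dss_def ss_upto_def is_ss_kmds_def ss_prefix_def ss_at_def
  by (rule arg_cong[where f = card]) (auto split: prod.splits simp: less_diff_conv)

theorem mainTheorem8:
  fixes k n :: nat and ms :: "nat list"
  assumes "k \<ge> 2" and "length ms = k"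
  shows "real (Dk k (map int ms) n) =
    (\<Sum>\<^sub>\<infinity> t \<in> {t :: nat list. length t = k - 1}.
       real (Dss k [if i < k - 1 then int (ms ! i + 2 * t ! i) else int (ms ! i). i \<leftarrow> [0..<k]] n))"
proof -
  have "[if i < k - 1 then int (ms ! i + 2 * t ! i) else int (ms ! i). i \<leftarrow> [0..<k]] =
      map int (shifted_ranks k 0 t ms)" for t
    unfolding shifted_ranks_def by simp
  then have summand: "Dss k [if i < k - 1 then int (ms ! i + 2 * t ! i) else int (ms ! i). i \<leftarrow> [0..<k]] n
      = card (ss_upto k n (shifted_ranks k 0 t ms) (k - 1))" for t
    by (simp only: Dss_eq_ss_upto)
  have "Dk k (map int ms) n =
      (\<Sum>t\<in>bounded_lists (Suc n) (k - 1). card (ss_upto k n (shifted_ranks k 0 t ms) (k - 1)))"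
    unfolding Dk_eq_ss_upto by (rule ss_upto_multisum) (simp_all add: assms(2))
  then have "real (Dk k (map int ms) n) =
      (\<Sum>t\<in>bounded_lists (Suc n) (k - 1). real (card (ss_upto k n (shifted_ranks k 0 t ms) (k - 1))))"
    by simp
  also have "\<dots> = (\<Sum>\<^sub>\<infinity> t \<in> {t. length t = k - 1}.
      real (card (ss_upto k n (shifted_ranks k 0 t ms) (k - 1))))"
    using ss_upto_shifted_empty[OF assms(2)] by (intro infsum_bounded_support[symmetric]) simp
  finally show ?thesis unfolding summand .
qed

end
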